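(* Let $(X,\mathcal U)$ be a $\Delta$-rotund quasi-uniform space (respectively, a $\Delta$-rotund uniform space), with $X$ carrying the topology $\tau_{\mathcal U}$. Then for every entourage $U\in\mathcal U$ there is a right-continuous $\mathcal U$-uniform quasi-pseudometric (respectively, pseudometric) $p:X\times X\to[0,1]$ such that $B_p(x,1)\subset\overline{B(x;U)}^\circ$ for every $x\in X$.
   Context: Entourages, $U\circ V$, $U^{-1}$, $B(x;U)=\{y:(x,y)\in U\}$. A quasi-uniformity on $X$ is a family $\mathcal U$ of subsets of $X\times X$ containing the diagonal, closed under supersets, any two members containing a common member, and such that for each $U\in\mathcal U$ some $V\in\mathcal U$ has $V\circ V\subset U$; it is a uniformity if moreover $U^{-1}\in\mathcal U$ for all $U\in\mathcal U$. Its topology $\tau_{\mathcal U}$: $W$ is open iff for every $x\in W$ some $U\in\mathcal U$ satisfies $B(x;U)\subset W$. $\overline S^\circ$ denotes the interior of the closure. A base $\mathcal B\subset\mathcal U$ (every member of $\mathcal U$ contains one from $\mathcal B$) is multiplicative if closed under $\circ$, and $\Delta$-rotund if $B(\overline{B(x;V)};U)\subset\overline{B(x;V\circ W\circ U)}$ for all $x\in X$, $U,V,W\in\mathcal B$ (where $B(A;U)=\bigcup_{a\in A}B(a;U)$). $(X,\mathcal U)$ is $\Delta$-rotund if $\mathcal U$ has a $\Delta$-rotund multiplicative base. A premetric $p$ ($p(x,x)=0$) is $\mathcal U$-uniform if $\{(x,y):p(x,y)<\varepsilon\}\in\mathcal U$ for every $\varepsilon>0$; right-continuous if $y\mapsto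 p(x,y)$ is continuous for each $x$; a quasi-pseudometric satisfies the triangle inequality; a pseudometric is a symmetric quasi-pseudometric. $B_p(x,1)=\{y:p(x,y)<1\}$. *)

theory Defs
  imports "HOL-Analysis.Analysis"
begin

text \<open>The underlying set X is the universe of the type 'a.
  Composition U \<circ> V of the paper is relational composition (first U then V),
  i.e. Isabelle's U O V; B(x;U) = U `` {x}, B(A;U) = U `` A.\<close>

definition quasi_uniformity :: "('a \<times> 'a) set set \<Rightarrow> bool" where
  "quasi_uniformity \<U> \<longleftrightarrow>
     (\<forall>U\<in>\<U>. Id \<subseteq> U) \<and>
     (\<forall>U\<in>\<U>. \<forall>V. U \<subseteq> V \<longrightarrow> V \<in> \<U>) \<and>
     (\<forall>U\<in>\<U>. \<forall>V\<in>\<U>. \<exists>W\<in>\<U>. W \<subseteq> U \<inter> V) \<and>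
     (\<forall>U\<in>\<U>. \<exists>V\<in>\<U>. V O V \<subseteq> U)"

definition uniformity :: "('a \<times> 'a) set set \<Rightarrow> bool" where
  "uniformity \<U> \<longleftrightarrow> quasi_uniformity \<U> \<and> (\<forall>U\<in>\<U>. U\<inverse> \<in> \<U>)"

definition uopen :: "('a \<times> 'a) set set \<Rightarrow> 'a set \<Rightarrow> bool" where
  "uopen \<U> W \<longleftrightarrow> (\<forall>x\<in>W. \<exists>U\<in>\<U>. U `` {x} \<subseteq> W)"

definition uclosure :: "('a \<times> 'a) set set \<Rightarrow> 'a set \<Rightarrow> 'a set" where
  "uclosure \<U> S = {x. \<forall>W. uopen \<U> W \<and> x \<in> W \<longrightarrow> W \<inter> S \<noteq> {}}"

definition uinterior :: "('a \<times> 'a) set set \<Rightarrow> 'a set \<Rightarrow> 'a set" where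
  "uinterior \<U> S = \<Union>{W. uopen \<U> W \<and> W \<subseteq> S}"

definition is_base :: "('a \<times> 'a) set set \<Rightarrow> ('a \<times> 'a) set set \<Rightarrow> bool" where
  "is_base \<U> \<B> \<longleftrightarrow> \<B> \<subseteq> \<U> \<and> (\<forall>U\<in>\<U>. \<exists>B\<in>\<B>. B \<subseteq> U)"

definition multiplicative :: "('a \<times> 'a) set set \<Rightarrow> bool" where
  "multiplicative \<B> \<longleftrightarrow> (\<forall>U\<in>\<B>. \<forall>V\<in>\<B>. U O V \<in> \<B>)"

definition delta_rotund_base :: "('a \<times> 'a) set set \<Rightarrow> ('a \<times> 'a) set set \<Rightarrow> bool" where
  "delta_rotund_base \<U> \<B> \<longleftrightarrow>
     (\<forall>x. \<forall>U\<in>\<B>. \<forall>V\<in>\<B>. \<forall>W\<in>\<B>.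
        U `` (uclosure \<U> (V `` {x})) \<subseteq> uclosure \<U> ((V O W O U) `` {x}))"

definition delta_rotund :: "('a \<times> 'a) set set \<Rightarrow> bool" where
  "delta_rotund \<U> \<longleftrightarrow>
     (\<exists>\<B>. is_base \<U> \<B> \<and> multiplicative \<B> \<and> delta_rotund_base \<U> \<B>)"

definition premetric :: "('a \<Rightarrow> 'a \<Rightarrow> real) \<Rightarrow> bool" where
  "premetric p \<longleftrightarrow> (\<forall>x y. 0 \<le> p x y) \<and> (\<forall>x. p x x = 0)"

definition quasi_pseudometric :: "('a \<Rightarrow> 'a \<Rightarrow> real) \<Rightarrow> bool" where
  "quasi_pseudometric p \<longleftrightarrow> premetric p \<and> (\<forall>x y z. p x z \<le> p x y + p y z)"

definition pseudometric :: "('a \<Rightarrow> 'a \<Rightarrow> real) \<Rightarrow> bool" where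
  "pseudometric p \<longleftrightarrow> quasi_pseudometric p \<and> (\<forall>x y. p x y = p y x)"

definition uniform_premetric :: "('a \<times> 'a) set set \<Rightarrow> ('a \<Rightarrow> 'a \<Rightarrow> real) \<Rightarrow> bool" where
  "uniform_premetric \<U> p \<longleftrightarrow> (\<forall>\<epsilon>>0. {(x, y). p x y < \<epsilon>} \<in> \<U>)"

definition right_continuous :: "('a \<times> 'a) set set \<Rightarrow> ('a \<Rightarrow> 'a \<Rightarrow> real) \<Rightarrow> bool" where
  "right_continuous \<U> p \<longleftrightarrow> (\<forall>x. \<forall>S. open S \<longrightarrow> uopen \<U> ((p x) -` S))"

end

theory Submission
  imports Defs
begin

(* Pick entourages W 0 \<subseteq> U from a multiplicative \<Delta>-rotund base with W (n+1) O W (n+1) \<subseteq> W n,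
   and attach to each dyadic k/2^n an entourage V n k, the composite of the W i along the binary
   expansion of k/2^n, so that V n k O W n \<subseteq> V n (k+1).  For fixed z the function
   level z y = inf {k/2^n. y \<in> cl B(z; V n k)} (capped at 1) is lower semicontinuous, and
   \<Delta>-rotundity is exactly what makes it grow by at most 2/2^n along W (n+1).  Then
   p x y = sup_z max 0 (level z y - level z x) is a uniform, right-continuous quasi-pseudometric
   with p x y \<ge> level x y, which gives the ball inclusion; in the uniform case
   max (p x y) (p y x) is the required pseudometric. *)

lemma quasi_uniformity_refl: "quasi_uniformity \<U> \<Longrightarrow> A \<in> \<U> \<Longrightarrow> Id \<subseteq> A"
  unfolding quasi_uniformity_def by blast

lemma quasi_uniformity_superset: "quasi_uniformity \<U> \<Longrightarrow> A \<in> \<U> \<Longrightarrow> A \<subseteq> B \<Longrightarrow> B \<in> \<U>"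
  unfolding quasi_uniformity_def by blast

lemma quasi_uniformity_Int:
  assumes "quasi_uniformity \<U>" "A \<in> \<U>" "B \<in> \<U>"
  shows "A \<inter> B \<in> \<U>"
proof -
  obtain C where "C \<in> \<U>" "C \<subseteq> A \<inter> B"
    using assms unfolding quasi_uniformity_def by blast
  then show ?thesis using assms(1) quasi_uniformity_superset by blast
qed

lemma quasi_uniformity_square: "quasi_uniformity \<U> \<Longrightarrow> A \<in> \<U> \<Longrightarrow> \<exists>B\<in>\<U>. B O B \<subseteq> A"
  unfolding quasi_uniformity_def by blast

lemma base_square:
  assumes "quasi_uniformity \<U>" "is_base \<U> \<B>" "A \<in> \<B>"
  shows "\<exists>B\<in>\<B>. B O B \<subseteq> A"
proof -
  obtain C where "C \<in> \<U>" "C O C \<subseteq> A"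
    using assms quasi_uniformity_square unfolding is_base_def by blast
  moreover obtain B where "B \<in> \<B>" "B \<subseteq> C"
    using \<open>C \<in> \<U>\<close> assms(2) unfolding is_base_def by blast
  ultimately show ?thesis using relcomp_mono by blast
qed

lemma halving_sequence_exists:
  assumes "quasi_uniformity \<U>" "is_base \<U> \<B>" "U \<in> \<U>"
  obtains W where "W 0 \<subseteq> U" "\<And>n. W n \<in> \<B>" "\<And>n. W (Suc n) O W (Suc n) \<subseteq> W n"
proof -
  obtain W0 where "W0 \<in> \<B>" "W0 \<subseteq> U"
    using assms(2,3) unfolding is_base_def by blast
  then have "\<exists>W. \<forall>n. (W n \<in> \<B> \<and> (n = 0 \<longrightarrow> W n \<subseteq> U)) \<and> W (Suc n) O W (Suc n) \<subseteq> W n"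
    using base_square[OF assms(1,2)] by (intro dependent_nat_choice) (auto, blast+)
  then obtain W where W: "\<forall>n. (W n \<in> \<B> \<and> (n = 0 \<longrightarrow> W n \<subseteq> U)) \<and> W (Suc n) O W (Suc n) \<subseteq> W n"
    by blast
  show ?thesis
  proof (rule that)
    show "W 0 \<subseteq> U" "W n \<in> \<B>" "W (Suc n) O W (Suc n) \<subseteq> W n" for n
      using W by blast+
  qed
qed

lemma uclosure_superset: "S \<subseteq> uclosure \<U> S"
  unfolding uclosure_def by blast

lemma uclosure_mono: "S \<subseteq> T \<Longrightarrow> uclosure \<U> S \<subseteq> uclosure \<U> T"
  unfolding uclosure_def by blast

lemma notin_uclosure_entourage:
  assumes "y \<notin> uclosure \<U> S"
  shows "\<exists>A\<in>\<U>. A `` {y} \<inter> uclosure \<U> S = {}"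
proof -
  obtain G where G: "uopen \<U> G" "y \<in> G" "G \<inter> S = {}"
    using assms unfolding uclosure_def by blast
  then obtain A where "A \<in> \<U>" "A `` {y} \<subseteq> G"
    unfolding uopen_def by blast
  moreover have "G \<inter> uclosure \<U> S = {}"
    using G unfolding uclosure_def by blast
  ultimately show ?thesis by blast
qed

text \<open>The points having an entourage neighbourhood inside S form an open set, because
  entourages have square roots.\<close>

lemma in_uinteriorI:
  assumes qu: "quasi_uniformity \<U>" and "A \<in> \<U>" "A `` {y} \<subseteq> S"
  shows "y \<in> uinterior \<U> S"
proof -
  let ?O = "{y'. \<exists>A\<in>\<U>. A `` {y'} \<subseteq> S}"
  have "uopen \<U> ?O"
    unfolding uopen_def
  proof
    fix y' assume "y' \<in> ?O"
    then obtain A where A: "A \<in> \<U>" "A `` {y'} \<subseteq> S" by blast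
    obtain B where B: "B \<in> \<U>" "B O B \<subseteq> A"
      using quasi_uniformity_square[OF qu A(1)] by blast
    have "B `` {y''} \<subseteq> S" if "y'' \<in> B `` {y'}" for y''
      using that B(2) A(2) by blast
    then show "\<exists>C\<in>\<U>. C `` {y'} \<subseteq> ?O" using B(1) by blast
  qed
  moreover have "?O \<subseteq> S"
    using quasi_uniformity_refl[OF qu] by blast
  ultimately show ?thesis
    using assms(2,3) unfolding uinterior_def by blast
qed

lemma uopen_vimage_openI:
  fixes g :: "'a \<Rightarrow> real"
  assumes "open S" "\<And>y e. e > 0 \<Longrightarrow> \<exists>A\<in>\<U>. \<forall>y'\<in>A `` {y}. \<bar>g y' - g y\<bar> < e"
  shows "uopen \<U> (g -` S)"
  unfolding uopen_def
proof
  fix y assume "y \<in> g -` S"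
  then obtain e where e: "e > 0" "ball (g y) e \<subseteq> S"
    using assms(1) open_contains_ball by blast
  then obtain A where "A \<in> \<U>" "\<forall>y'\<in>A `` {y}. \<bar>g y' - g y\<bar> < e"
    using assms by blast
  moreover have "A `` {y} \<subseteq> g -` S"
    using calculation(2) e(2) by (force simp: dist_real_def abs_minus_commute)
  ultimately show "\<exists>A\<in>\<U>. A `` {y} \<subseteq> g -` S" by blast
qed

lemma right_continuousI:
  assumes "\<And>x y e. e > 0 \<Longrightarrow> \<exists>A\<in>\<U>. \<forall>y'\<in>A `` {y}. \<bar>p x y' - p x y\<bar> < e"
  shows "right_continuous \<U> p"
  unfolding right_continuous_def
proof (intro allI impI)
  fix x and S :: "real set"
  assume "open S"
  then show "uopen \<U> (p x -` S)"
    using assms by (rule uopen_vimage_openI)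
qed

lemma quasi_pseudometric_upper_near:
  assumes "quasi_pseudometric p" "uniform_premetric \<U> p" "e > 0"
  shows "\<exists>A\<in>\<U>. \<forall>y'\<in>A `` {y}. p x y' < p x y + e"
proof
  show "{(u, v). p u v < e} \<in> \<U>"
    using assms(2,3) unfolding uniform_premetric_def by blast
  show "\<forall>y'\<in>{(u, v). p u v < e} `` {y}. p x y' < p x y + e"
  proof
    fix y' assume "y' \<in> {(u, v). p u v < e} `` {y}"
    moreover have "p x y' \<le> p x y + p y y'"
      using assms(1) unfolding quasi_pseudometric_def by blast
    ultimately show "p x y' < p x y + e" by auto
  qed
qed

lemma pseudometric_right_continuous:
  assumes "pseudometric q" "uniform_premetric \<U> q"
  shows "right_continuous \<U> q"
proof (rule right_continuousI)
  fix x y and e :: real assume "e > 0"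
  have tri: "q a c \<le> q a b + q b c" and sym: "q a b = q b a" for a b c
    using assms(1) unfolding pseudometric_def quasi_pseudometric_def by blast+
  show "\<exists>A\<in>\<U>. \<forall>y'\<in>A `` {y}. \<bar>q x y' - q x y\<bar> < e"
  proof
    show "{(u, v). q u v < e} \<in> \<U>"
      using assms(2) \<open>e > 0\<close> unfolding uniform_premetric_def by blast
    show "\<forall>y'\<in>{(u, v). q u v < e} `` {y}. \<bar>q x y' - q x y\<bar> < e"
    proof
      fix y' assume "y' \<in> {(u, v). q u v < e} `` {y}"
      then have "q y y' < e" by blast
      moreover have "q x y' \<le> q x y + q y y'" "q x y \<le> q x y' + q y y'"
        using tri[of x y y'] tri[of x y' y] sym[of y' y] by auto
      ultimately show "\<bar>q x y' - q x y\<bar> < e" by linarith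
    qed
  qed
qed

lemma pseudometric_max_converse:
  assumes "quasi_pseudometric p"
  shows "pseudometric (\<lambda>x y. max (p x y) (p y x))"
proof -
  have p: "\<And>x y. 0 \<le> p x y" "\<And>x. p x x = 0" "\<And>x y z. p x z \<le> p x y + p y z"
    using assms unfolding quasi_pseudometric_def premetric_def by blast+
  have "max (p x z) (p z x) \<le> max (p x y) (p y x) + max (p y z) (p z y)" for x y z
    using p(3)[where x=x and y=y and z=z] p(3)[where x=z and y=y and z=x]
    by (auto simp: max_def)
  then show ?thesis
    unfolding pseudometric_def quasi_pseudometric_def premetric_def
  proof (intro conjI allI)
    fix x y
    show "0 \<le> max (p x y) (p y x)"
      using p(1) by (rule max.coboundedI1)
    show "max (p x x) (p x x) = 0"
      using p(2) by simp
    show "max (p x y) (p y x) = max (p y x) (p x y)"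
      by (rule max.commute)
  qed
qed

lemma uniform_premetric_max_converse:
  assumes "uniformity \<U>" "uniform_premetric \<U> p"
  shows "uniform_premetric \<U> (\<lambda>x y. max (p x y) (p y x))"
  unfolding uniform_premetric_def
proof (intro allI impI)
  fix e :: real assume "e > 0"
  have qu: "quasi_uniformity \<U>"
    using assms(1) unfolding uniformity_def by blast
  have "{(x, y). p x y < e} \<in> \<U>" "{(x, y). p x y < e}\<inverse> \<in> \<U>"
    using assms \<open>e > 0\<close> unfolding uniform_premetric_def uniformity_def by blast+
  then have "{(x, y). p x y < e} \<inter> {(x, y). p x y < e}\<inverse> \<in> \<U>"
    by (rule quasi_uniformity_Int[OF qu])
  moreover have "{(x, y). max (p x y) (p y x) < e} = {(x, y). p x y < e} \<inter> {(x, y). p x y < e}\<inverse>"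
    by auto
  ultimately show "{(x, y). max (p x y) (p y x) < e} \<in> \<U>"
    by (simp only:)
qed

lemma dyadic_above:
  fixes c :: real
  assumes "0 \<le> c"
  shows "\<exists>k::nat. 1 \<le> k \<and> c < real k / 2^n \<and> real k / 2^n \<le> c + 1 / 2^n"
proof -
  define k where "k = nat \<lfloor>c * 2^n\<rfloor> + 1"
  have "real k = of_int \<lfloor>c * 2^n\<rfloor> + 1"
    using assms unfolding k_def by simp
  then have "c * 2^n < real k" "real k \<le> c * 2^n + 1"
    by linarith+
  then have "c < real k / 2^n" "real k / 2^n \<le> c + 1 / 2^n"
    by (simp_all add: pos_less_divide_eq pos_divide_le_eq distrib_right)
  then show ?thesis unfolding k_def by auto
qed

lemma ex_two_over_pow2_less: "e > 0 \<Longrightarrow> \<exists>n. 2 / (2::real)^n < e"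
  using real_arch_pow_inv[of "e/2" "1/2"] by (auto simp: power_one_over field_simps)

locale dyadic_scale =
  fixes \<U> \<B> :: "('a \<times> 'a) set set" and W :: "nat \<Rightarrow> ('a \<times> 'a) set"
  assumes qu: "quasi_uniformity \<U>" and base_subset: "\<B> \<subseteq> \<U>"
    and mult: "multiplicative \<B>" and rotund: "delta_rotund_base \<U> \<B>"
    and W_base: "W n \<in> \<B>" and W_halving: "W (Suc n) O W (Suc n) \<subseteq> W n"
begin

lemma W_entourage: "W n \<in> \<U>"
  using W_base base_subset by blast

lemma Id_subset_W: "Id \<subseteq> W n"
  using quasi_uniformity_refl[OF qu W_entourage] .

text \<open>V n k stands for the dyadic k/2^n: a binary digit 1 in position i after the point
  contributes the factor W i, the integer part m the factor W 0 ^^ m.\<close>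

primrec V :: "nat \<Rightarrow> nat \<Rightarrow> ('a \<times> 'a) set" where
  "V 0 k = W 0 ^^ k"
| "V (Suc n) k = (if even k then V n (k div 2)
                  else if k = 1 then W (Suc n) else V n (k div 2) O W (Suc n))"

lemma V_one [simp]: "V n 1 = W n" "V n (Suc 0) = W n"
  by (cases n; simp)+

lemma V_in_base: "1 \<le> k \<Longrightarrow> V n k \<in> \<B>"
proof (induction n arbitrary: k)
  case 0
  then show ?case
  proof (induction k rule: dec_induct)
    case (step k)
    then show ?case using mult W_base unfolding multiplicative_def by simp
  qed (simp add: W_base)
next
  case (Suc n)
  have "V n (k div 2) \<in> \<B>" if "k \<noteq> 1"
    using that Suc by (intro Suc.IH) presburger
  then show ?case
    using mult W_base unfolding multiplicative_def by simp
qed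

lemma V_comp_W: "1 \<le> k \<Longrightarrow> V n k O W n \<subseteq> V n (Suc k)"
proof (induction n arbitrary: k)
  case (Suc n)
  consider j where "k = 2 * j" "1 \<le> j" | "k = 1" | j where "k = 2 * j + 1" "1 \<le> j"
    using Suc.prems by (metis evenE oddE One_nat_def add_0 less_one mult_0_right not_less)
  then show ?case
  proof cases
    case 1
    then show ?thesis by simp
  next
    case 2
    then have "V (Suc n) (Suc k) = V n 1"
      by simp
    then show ?thesis using 2 W_halving by simp
  next
    case 3
    then have "V (Suc n) k O W (Suc n) = V n j O (W (Suc n) O W (Suc n))"
      by (simp add: O_assoc)
    also have "\<dots> \<subseteq> V n j O W n"
      using W_halving by (rule relcomp_mono[OF order_refl])
    also have "\<dots> \<subseteq> V (Suc n) (Suc k)"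
      using Suc.IH 3 by simp
    finally show ?thesis .
  qed
qed simp

lemma V_mono: assumes "1 \<le> k" "k \<le> l" shows "V n k \<subseteq> V n l"
  using assms(2)
proof (induction l rule: dec_induct)
  case (step l)
  have "V n l \<subseteq> V n l O W n"
    using Id_subset_W by auto
  also have "\<dots> \<subseteq> V n (Suc l)"
    using V_comp_W assms(1) step(1) by simp
  finally show ?case using step.IH by simp
qed simp

lemma V_scale: "V (n + j) (k * 2^j) = V n k"
  by (induction j) (auto simp: mult.assoc[symmetric] mult.commute[of k])

lemma V_pow2: "V n (2^n) = W 0"
  using V_scale[of 0 n 1] by simp

lemma V_dyadic_mono:
  assumes "1 \<le> k" "1 \<le> l" "real k / 2^n \<le> real l / 2^m"
  shows "V n k \<subseteq> V m l"
proof -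
  have "real (k * 2^m) \<le> real (l * 2^n)"
    using assms(3) by (simp add: field_simps)
  then have "k * 2^m \<le> l * 2^n"
    by (simp only: of_nat_le_iff)
  then have "V (n + m) (k * 2^m) \<subseteq> V (m + n) (l * 2^n)"
    using assms(1) by (simp add: V_mono add.commute)
  then show ?thesis by (simp only: V_scale)
qed

text \<open>This is where \<Delta>-rotundity enters.\<close>

lemma W_image_uclosure_V:
  assumes "1 \<le> k" "x \<in> uclosure \<U> (V n k `` {z})" "(x, y) \<in> W (Suc n)"
  shows "y \<in> uclosure \<U> (V n (Suc k) `` {z})"
proof -
  have "y \<in> W (Suc n) `` uclosure \<U> (V n k `` {z})"
    using assms by blast
  also have "\<dots> \<subseteq> uclosure \<U> ((V n k O W (Suc n) O W (Suc n)) `` {z})"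
    using rotund W_base V_in_base[OF assms(1)] unfolding delta_rotund_base_def by blast
  also have "\<dots> \<subseteq> uclosure \<U> (V n (Suc k) `` {z})"
  proof (intro uclosure_mono Image_mono order_refl)
    have "V n k O W (Suc n) O W (Suc n) \<subseteq> V n k O W n"
      using W_halving by (simp add: relcomp_mono)
    also have "\<dots> \<subseteq> V n (Suc k)"
      using V_comp_W assms(1) by blast
    finally show "V n k O W (Suc n) O W (Suc n) \<subseteq> V n (Suc k)" .
  qed
  finally show ?thesis .
qed

definition levels :: "'a \<Rightarrow> 'a \<Rightarrow> real set" where
  "levels z y = {real k / 2^n | n k. 1 \<le> k \<and> y \<in> uclosure \<U> (V n k `` {z})} \<union> {1}"

definition level :: "'a \<Rightarrow> 'a \<Rightarrow> real" where
  "level z y = Inf (levels z y)"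

lemma levels_nonempty: "levels z y \<noteq> {}"
  unfolding levels_def by blast

lemma levels_bdd_below: "bdd_below (levels z y)"
  unfolding levels_def bdd_below_def by (intro exI[of _ 0]) auto

lemma level_le: "s \<in> levels z y \<Longrightarrow> level z y \<le> s"
  unfolding level_def by (rule cInf_lower[OF _ levels_bdd_below])

lemma level_le_one: "level z y \<le> 1"
  by (rule level_le) (simp add: levels_def)

lemma level_nonneg: "0 \<le> level z y"
  unfolding level_def using levels_nonempty by (rule cInf_greatest) (auto simp: levels_def)

lemma level_le_dyadic: "1 \<le> k \<Longrightarrow> y \<in> uclosure \<U> (V n k `` {z}) \<Longrightarrow> level z y \<le> real k / 2^n"
  by (rule level_le) (auto simp: levels_def)

lemma level_less_dyadic:
  assumes "level z y < t" "t \<le> 1"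
  obtains n k where "1 \<le> k" "real k / 2^n < t" "y \<in> uclosure \<U> (V n k `` {z})"
proof -
  obtain s where "s \<in> levels z y" "s < t"
    using assms(1) cInf_less_iff[OF levels_nonempty levels_bdd_below] unfolding level_def by blast
  then show ?thesis using that assms(2) unfolding levels_def by auto
qed

lemma level_less_imp_uclosure:
  assumes "level z y < real K / 2^N" "real K / 2^N \<le> 1" "1 \<le> K"
  shows "y \<in> uclosure \<U> (V N K `` {z})"
proof -
  obtain n k where "1 \<le> k" "real k / 2^n < real K / 2^N" "y \<in> uclosure \<U> (V n k `` {z})"
    using assms(1,2) by (rule level_less_dyadic)
  moreover from this have "V n k `` {z} \<subseteq> V N K `` {z}"
    using V_dyadic_mono assms(3) by (intro Image_mono) auto
  ultimately show ?thesis using uclosure_mono by blast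
qed

lemma level_self: "level z z = 0"
proof (rule ccontr)
  assume "level z z \<noteq> 0"
  then have "0 < level z z"
    using level_nonneg[of z z] by linarith
  then obtain n where n: "2 / (2::real)^n < level z z"
    using ex_two_over_pow2_less by blast
  have "(z, z) \<in> V n 1"
    unfolding V_one(1) using Id_subset_W by blast
  then have "z \<in> uclosure \<U> (V n 1 `` {z})"
    using uclosure_superset[of "V n 1 `` {z}" \<U>] by blast
  then have "level z z \<le> real 1 / 2^n"
    by (rule level_le_dyadic[rotated]) simp
  moreover have "1 / (2::real)^n \<le> 2 / 2^n"
    by (simp add: divide_right_mono)
  ultimately show False using n by linarith
qed

lemma level_less_one_uinterior:
  assumes "W 0 \<subseteq> U" "level z y < 1"
  shows "y \<in> uinterior \<U> (uclosure \<U> (U `` {z}))"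
proof -
  obtain n k where nk: "1 \<le> k" "real k / 2^n < 1" "y \<in> uclosure \<U> (V n k `` {z})"
    using assms(2) by (rule level_less_dyadic) simp
  then have "k < 2^n"
    by (simp add: divide_less_eq flip: of_nat_less_iff)
  then have "V n (Suc k) \<subseteq> U"
    using V_mono[of "Suc k" "2^n" n] V_pow2 assms(1) by simp
  then have "W (Suc n) `` {y} \<subseteq> uclosure \<U> (U `` {z})"
    using W_image_uclosure_V[OF nk(1,3)] uclosure_mono[OF Image_mono] by blast
  then show ?thesis using in_uinteriorI[OF qu W_entourage] by blast
qed

lemma level_step:
  assumes "(x, y) \<in> W (Suc n)"
  shows "level z y \<le> level z x + 2 / 2^n"
proof (cases "level z x + 1 / 2^n < 1")
  case True
  obtain k where k: "1 \<le> k" "level z x < real k / 2^n" "real k / 2^n \<le> level z x + 1 / 2^n"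
    using dyadic_above[OF level_nonneg] by blast
  moreover have "real k / 2^n \<le> 1"
    using k(3) True by linarith
  ultimately have "x \<in> uclosure \<U> (V n k `` {z})"
    using k(1) by (intro level_less_imp_uclosure)
  then have "y \<in> uclosure \<U> (V n (Suc k) `` {z})"
    using W_image_uclosure_V[OF k(1) _ assms] by blast
  then have "level z y \<le> real (Suc k) / 2^n"
    by (rule level_le_dyadic[rotated]) simp
  then show ?thesis
    using k(3) by (simp add: add_divide_distrib)
next
  case False
  then show ?thesis
    using level_le_one[of z y] by (smt (verit) divide_right_mono zero_le_power)
qed

lemma level_lower_near:
  assumes "e > 0"
  shows "\<exists>A\<in>\<U>. \<forall>y'\<in>A `` {y}. level z y - e < level z y'"
proof (cases "level z y - e < 0")
  case True
  then show ?thesis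
    using level_nonneg W_entourage by (meson less_le_trans)
next
  case False
  obtain N where N: "2 / (2::real)^N < e"
    using ex_two_over_pow2_less assms by blast
  obtain K where K: "1 \<le> K" "level z y - e < real K / 2^N" "real K / 2^N \<le> level z y - e + 1 / 2^N"
    using dyadic_above False by (metis not_less)
  have "1 / (2::real)^N \<le> 2 / 2^N"
    by (simp add: divide_right_mono)
  then have K_below: "real K / 2^N < level z y"
    using K N by linarith
  have K_le_one: "real K / 2^N \<le> 1"
    using K_below level_le_one[of z y] by linarith
  have "y \<notin> uclosure \<U> (V N K `` {z})"
  proof
    assume "y \<in> uclosure \<U> (V N K `` {z})"
    then have "level z y \<le> real K / 2^N"
      by (rule level_le_dyadic[OF K(1)])
    with K_below show False by linarith
  qed
  then have "\<exists>A\<in>\<U>. A `` {y} \<inter> uclosure \<U> (V N K `` {z}) = {}"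
    by (rule notin_uclosure_entourage)
  then obtain A where A: "A \<in> \<U>" "A `` {y} \<inter> uclosure \<U> (V N K `` {z}) = {}"
    by blast
  have "level z y - e < level z y'" if "y' \<in> A `` {y}" for y'
  proof (rule ccontr)
    assume "\<not> level z y - e < level z y'"
    then have "level z y' < real K / 2^N"
      using K(2) by linarith
    then have "y' \<in> uclosure \<U> (V N K `` {z})"
      using K_le_one K(1) by (rule level_less_imp_uclosure)
    then show False using A that by blast
  qed
  then show ?thesis using A(1) by blast
qed

definition qdist :: "'a \<Rightarrow> 'a \<Rightarrow> real" where
  "qdist x y = (SUP z. max 0 (level z y - level z x))"

lemma level_increase_le_one: "max 0 (level z y - level z x) \<le> 1"
  using level_le_one[of z y] level_nonneg[of z x] by simp

lemma qdist_bdd: "bdd_above (range (\<lambda>z. max 0 (level z y - level z x)))"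
  using level_increase_le_one by (intro bdd_aboveI[of _ 1]) auto

lemma qdist_ge: "max 0 (level z y - level z x) \<le> qdist x y"
  unfolding qdist_def by (rule cSUP_upper[OF _ qdist_bdd]) simp

lemma qdist_le: "(\<And>z. max 0 (level z y - level z x) \<le> c) \<Longrightarrow> qdist x y \<le> c"
  unfolding qdist_def by (rule cSUP_least) auto

lemma less_qdistE:
  assumes "c < qdist x y"
  obtains z where "c < max 0 (level z y - level z x)"
  using assms less_cSUP_iff[OF _ qdist_bdd] unfolding qdist_def by blast

lemma qdist_nonneg: "0 \<le> qdist x y"
  using qdist_ge[of x y x] by simp

lemma qdist_le_one: "qdist x y \<le> 1"
  using level_increase_le_one by (rule qdist_le)

lemma quasi_pseudometric_qdist: "quasi_pseudometric qdist"
  unfolding quasi_pseudometric_def premetric_def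
proof (intro conjI allI)
  show "qdist x x = 0" for x
    by (intro antisym qdist_le qdist_nonneg) simp
  show "qdist x z \<le> qdist x y + qdist y z" for x y z
  proof (rule qdist_le)
    fix w
    have "max 0 (level w z - level w x)
          \<le> max 0 (level w y - level w x) + max 0 (level w z - level w y)"
      by simp
    also have "\<dots> \<le> qdist x y + qdist y z"
      by (intro add_mono qdist_ge)
    finally show "max 0 (level w z - level w x) \<le> qdist x y + qdist y z" .
  qed
qed (rule qdist_nonneg)

lemma qdist_step: "(x, y) \<in> W (Suc n) \<Longrightarrow> qdist x y \<le> 2 / 2^n"
  using level_step by (intro qdist_le) (simp add: diff_le_eq add.commute)

lemma uniform_premetric_qdist: "uniform_premetric \<U> qdist"
  unfolding uniform_premetric_def
proof (intro allI impI)
  fix e :: real assume "e > 0"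
  then obtain n where "2 / (2::real)^n < e"
    using ex_two_over_pow2_less by blast
  then have "W (Suc n) \<subseteq> {(x, y). qdist x y < e}"
    using qdist_step by fastforce
  then show "{(x, y). qdist x y < e} \<in> \<U>"
    using quasi_uniformity_superset[OF qu W_entourage] by blast
qed

text \<open>Lower semicontinuity passes from the functions level z to their supremum.\<close>

lemma qdist_lower_near:
  assumes "e > 0"
  shows "\<exists>A\<in>\<U>. \<forall>y'\<in>A `` {y}. qdist x y - e < qdist x y'"
proof (cases "qdist x y < e")
  case True
  then show ?thesis
    using qdist_nonneg W_entourage by (meson diff_less_0_iff_less less_le_trans)
next
  case False
  then have lt: "qdist x y - e/2 < qdist x y" and pos: "0 < qdist x y - e/2"
    using assms by linarith+
  obtain z where "qdist x y - e/2 < max 0 (level z y - level z x)"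
    using lt by (rule less_qdistE)
  then have z: "qdist x y - e/2 < level z y - level z x"
    using pos by (simp add: less_max_iff_disj)
  obtain A where A: "A \<in> \<U>" "\<forall>y'\<in>A `` {y}. level z y - e/2 < level z y'"
    using level_lower_near assms by (meson half_gt_zero)
  have "qdist x y - e < qdist x y'" if "y' \<in> A `` {y}" for y'
  proof -
    have "level z y - e/2 < level z y'"
      using A(2) that by blast
    moreover have "level z y' - level z x \<le> qdist x y'"
      using qdist_ge[of z y' x] by simp
    ultimately show ?thesis using z by linarith
  qed
  then show ?thesis using A(1) by blast
qed

lemma right_continuous_qdist: "right_continuous \<U> qdist"
proof (rule right_continuousI)
  fix x y and e :: real assume "e > 0"
  obtain A where A: "A \<in> \<U>" "\<forall>y'\<in>A `` {y}. qdist x y' < qdist x y + e"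
    using quasi_pseudometric_upper_near[OF quasi_pseudometric_qdist uniform_premetric_qdist \<open>e > 0\<close>]
    by blast
  obtain B where B: "B \<in> \<U>" "\<forall>y'\<in>B `` {y}. qdist x y - e < qdist x y'"
    using qdist_lower_near[OF \<open>e > 0\<close>] by blast
  show "\<exists>C\<in>\<U>. \<forall>y'\<in>C `` {y}. \<bar>qdist x y' - qdist x y\<bar> < e"
  proof (intro bexI ballI)
    fix y' assume "y' \<in> (A \<inter> B) `` {y}"
    then have "qdist x y' < qdist x y + e" "qdist x y - e < qdist x y'"
      using A(2) B(2) by blast+
    then show "\<bar>qdist x y' - qdist x y\<bar> < e" by (simp add: abs_less_iff)
  qed (rule quasi_uniformity_Int[OF qu A(1) B(1)])
qed

lemma qdist_less_one_uinterior:
  "W 0 \<subseteq> U \<Longrightarrow> qdist x y < 1 \<Longrightarrow> y \<in> uinterior \<U> (uclosure \<U> (U `` {x}))"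
  using qdist_ge[of x y x] level_self level_less_one_uinterior by fastforce

end

lemma delta_rotund_quasi_pseudometric:
  assumes "quasi_uniformity \<U>" "delta_rotund \<U>" "U \<in> \<U>"
  shows "\<exists>p. (\<forall>x y. p x y \<in> {0..1}) \<and> quasi_pseudometric p \<and>
             uniform_premetric \<U> p \<and> right_continuous \<U> p \<and>
             (\<forall>x. {y. p x y < 1} \<subseteq> uinterior \<U> (uclosure \<U> (U `` {x})))"
proof -
  obtain \<B> where \<B>: "is_base \<U> \<B>" "multiplicative \<B>" "delta_rotund_base \<U> \<B>"
    using assms(2) unfolding delta_rotund_def by blast
  obtain W where W: "W 0 \<subseteq> U" "\<And>n. W n \<in> \<B>" "\<And>n. W (Suc n) O W (Suc n) \<subseteq> W n"
    using halving_sequence_exists[OF assms(1) \<B>(1) assms(3)] by blast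
  interpret dyadic_scale \<U> \<B> W
    using assms(1) \<B> W unfolding is_base_def by unfold_locales auto
  show ?thesis
    using qdist_nonneg qdist_le_one quasi_pseudometric_qdist uniform_premetric_qdist
      right_continuous_qdist qdist_less_one_uinterior[OF W(1)]
    by (intro exI[of _ qdist]) auto
qed

lemma delta_rotund_pseudometric:
  assumes un: "uniformity \<U>" and "delta_rotund \<U>" "U \<in> \<U>"
  shows "\<exists>p. (\<forall>x y. p x y \<in> {0..1}) \<and> pseudometric p \<and>
             uniform_premetric \<U> p \<and> right_continuous \<U> p \<and>
             (\<forall>x. {y. p x y < 1} \<subseteq> uinterior \<U> (uclosure \<U> (U `` {x})))"
proof -
  obtain p where p: "\<forall>x y. p x y \<in> {0..1}" "quasi_pseudometric p" "uniform_premetric \<U> p"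
      "\<forall>x. {y. p x y < 1} \<subseteq> uinterior \<U> (uclosure \<U> (U `` {x}))"
    using delta_rotund_quasi_pseudometric assms unfolding uniformity_def by blast
  let ?q = "\<lambda>x y. max (p x y) (p y x)"
  have q: "pseudometric ?q" "uniform_premetric \<U> ?q"
    using pseudometric_max_converse[OF p(2)] uniform_premetric_max_converse un p(3) by auto
  moreover have "right_continuous \<U> ?q"
    using q by (rule pseudometric_right_continuous)
  moreover have "?q x y \<in> {0..1}" for x y
    using p(1) by (simp add: le_max_iff_disj)
  moreover have "{y. ?q x y < 1} \<subseteq> uinterior \<U> (uclosure \<U> (U `` {x}))" for x
    using p(4) by fastforce
  ultimately show ?thesis
    by (intro exI[of _ ?q]) blast
qed

theorem corollary2p14:
  fixes \<U> :: "('a \<times> 'a) set set"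
  shows "(quasi_uniformity \<U> \<and> delta_rotund \<U> \<longrightarrow>
            (\<forall>U\<in>\<U>. \<exists>p. (\<forall>x y. p x y \<in> {0..1}) \<and> quasi_pseudometric p \<and>
                 uniform_premetric \<U> p \<and> right_continuous \<U> p \<and>
                 (\<forall>x. {y. p x y < 1} \<subseteq> uinterior \<U> (uclosure \<U> (U `` {x})))))
       \<and> (uniformity \<U> \<and> delta_rotund \<U> \<longrightarrow>
            (\<forall>U\<in>\<U>. \<exists>p. (\<forall>x y. p x y \<in> {0..1}) \<and> pseudometric p \<and>
                 uniform_premetric \<U> p \<and> right_continuous \<U> p \<and>
                 (\<forall>x. {y. p x y < 1} \<subseteq> uinterior \<U> (uclosure \<U> (U `` {x})))))"
proof (intro conjI impI ballI)
  fix U assume "quasi_uniformity \<U> \<and> delta_rotund \<U>" "U \<in> \<U>"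
  then show "\<exists>p. (\<forall>x y. p x y \<in> {0..1}) \<and> quasi_pseudometric p \<and>
                 uniform_premetric \<U> p \<and> right_continuous \<U> p \<and>
                 (\<forall>x. {y. p x y < 1} \<subseteq> uinterior \<U> (uclosure \<U> (U `` {x})))"
    using delta_rotund_quasi_pseudometric by blast
next
  fix U assume "uniformity \<U> \<and> delta_rotund \<U>" "U \<in> \<U>"
  then show "\<exists>p. (\<forall>x y. p x y \<in> {0..1}) \<and> pseudometric p \<and>
                 uniform_premetric \<U> p \<and> right_continuous \<U> p \<and>
                 (\<forall>x. {y. p x y < 1} \<subseteq> uinterior \<U> (uclosure \<U> (U `` {x})))"
    using delta_rotund_pseudometric by blast
qed

end
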